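(* Let $P_n$ be the path on $n>2$ vertices $1,\dots,n$ with edges $e_i=\{i,i+1\}$ ($1\le i\le n-1$), let $f_j=\{j,j+2\}$ ($1\le j\le n-2$), let $B=\{e_1,f_1,\dots,e_{n-2},f_{n-2},e_{n-1}\}$, and let $\mathfrak{D}_{P_n}=\mathfrak{D}_2(P_n)[B,B]$. Write $\det(xI-\mathfrak{D}_{P_n})=\sum_{i=0}^{2n-3}a_ix^i$. If $|a_\ell|=\max\{|a_0|,|a_1|,\dots,|a_{2n-4}|\}$, then $\ell\le\lfloor\frac{7n}{5}\rfloor$.
   Context: For a tree $T$, let $\mathcal{V}_2$ be the set of 2-element vertex subsets (edges regarded as elements of $\mathcal{V}_2$). The 2-Steiner distance matrix $\mathfrak{D}_2(T)$ is indexed by $\mathcal{V}_2$, with entry in row $\{i,j\}$, column $\{k,l\}$ equal to the minimum number of edges of a connected subtree of $T$ whose vertex set contains $i,j,k,l$. $M[B,B]$ denotes the principal submatrix with rows and columns indexed by $B$. *)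

theory Defs
  imports "Jordan_Normal_Form.Char_Poly"
begin

text \<open>Graphs are given by a vertex set V and a set E of edges (2-element vertex sets).\<close>

definition connected_subgraph :: "'v set \<Rightarrow> 'v set set \<Rightarrow> 'v set \<Rightarrow> 'v set set \<Rightarrow> bool" where
  "connected_subgraph V E W F \<longleftrightarrow>
     W \<subseteq> V \<and> W \<noteq> {} \<and> F \<subseteq> E \<and> (\<forall>e\<in>F. e \<subseteq> W) \<and>
     (\<forall>u\<in>W. \<forall>w\<in>W. (u, w) \<in> {(x, y). {x, y} \<in> F}\<^sup>*)"

definition steiner_dist :: "'v set \<Rightarrow> 'v set set \<Rightarrow> 'v set \<Rightarrow> nat" where
  "steiner_dist V E S = (LEAST k. \<exists>W F. connected_subgraph V E W F \<and> S \<subseteq> W \<and> finite F \<and> card F = k)"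

definition steiner2_entry :: "'v set \<Rightarrow> 'v set set \<Rightarrow> 'v set \<Rightarrow> 'v set \<Rightarrow> nat" where
  "steiner2_entry V E A C = steiner_dist V E (A \<union> C)"

definition path_V :: "nat \<Rightarrow> nat set" where
  "path_V n = {1..n}"

definition path_E :: "nat \<Rightarrow> nat set set" where
  "path_E n = {{i, i + 1} | i. 1 \<le> i \<and> i \<le> n - 1}"

text \<open>The ordered index set B = (e_1, f_1, e_2, f_2, ..., e_{n-2}, f_{n-2}, e_{n-1}), with
  e_i = {i,i+1} and f_j = {j,j+2}. Position k (0-based, k < 2n-3): k even gives e_{k/2+1},
  k odd gives f_{(k+1)/2}.\<close>

definition B_elem :: "nat \<Rightarrow> nat set" where
  "B_elem k = (if even k then {k div 2 + 1, k div 2 + 2} else {(k + 1) div 2, (k + 1) div 2 + 2})"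

definition D_path :: "nat \<Rightarrow> int mat" where
  "D_path n = mat (2 * n - 3) (2 * n - 3)
     (\<lambda>(r, c). int (steiner2_entry (path_V n) (path_E n) (B_elem r) (B_elem c)))"

end

theory Submission
  imports Defs "Jordan_Normal_Form.DL_Submatrix"
begin

(* The coefficient a_l of the characteristic polynomial of an N x N matrix is (-1)^(N-l) times
   the sum of its principal minors of order N - l.  The k-th element of B is {lo k, hi k}, and
   the Steiner distance of a vertex set on a path is its span, so the entry of D_{P_n} in
   positions k, k' is hi(max k k') - lo(min k k'): every principal submatrix is a "max-min
   matrix" b_(max i j) - a_(min i j).  Eliminating its last row and column and taking the Schur
   complement of the corner entry gives its determinant in closed form as (-1)^(m-1) w, where
   the weight w > 0 is an explicit expression in the gaps between consecutive indices.  Hence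
   a_l = -W(N - l), where W(m) is the total weight of the m-subsets of B.  Inserting one index
   into a subset at most halves its weight, so counting pairs (m-subset, new index) gives
   (N - m) W(m) <= 2 (m + 1) W(m + 1).  Thus |a_l| < |a_(l-1)| whenever l > 2 (N - l + 1),
   which is the case for l > 7n/5. *)

section \<open>Sorted enumerations and sums over subsets\<close>

lemma sorted_list_of_set_eq_map_pick:
  assumes "finite T"
  shows "sorted_list_of_set T = map (pick T) [0..<card T]"
proof -
  let ?l = "map (pick T) [0..<card T]"
  have sorted: "sorted_wrt (<) ?l"
    by (auto simp: sorted_wrt_iff_nth_less intro: pick_mono)
  have "set ?l \<subseteq> T"
    by (auto intro: pick_in_set)
  moreover have "card (set ?l) = card T"
    using distinct_card[OF strict_sorted_iff[THEN iffD1, OF sorted, THEN conjunct2]] by simp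
  ultimately have "set ?l = T"
    using assms by (simp add: card_subset_eq)
  with sorted assms show ?thesis
    by (simp flip: sorted_list_of_set_unique)
qed

lemma bij_betw_pick:
  assumes "finite T"
  shows "bij_betw (pick T) {..<card T} T"
proof -
  have "bij_betw ((!) (sorted_list_of_set T)) {..<card T} T"
    using assms by (intro bij_betw_nth) auto
  moreover have "pick T i = sorted_list_of_set T ! i" if "i < card T" for i
    using assms that by (simp add: sorted_list_of_set_eq_map_pick)
  ultimately show ?thesis
    using bij_betw_cong[of "{..<card T}" "pick T" "(!) (sorted_list_of_set T)" T] by simp
qed

lemma sorted_list_of_set_insert_split:
  fixes V :: "'a :: linorder set"
  assumes "finite V" and "x \<notin> V"
  obtains xs ys where "sorted_wrt (<) (xs @ x # ys)"
    and "sorted_list_of_set V = xs @ ys" and "sorted_list_of_set (insert x V) = xs @ x # ys"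
proof -
  define xs where "xs = sorted_list_of_set {v \<in> V. v < x}"
  define ys where "ys = sorted_list_of_set {v \<in> V. x < v}"
  have xs: "sorted_wrt (<) xs" "set xs = {v \<in> V. v < x}"
    and ys: "sorted_wrt (<) ys" "set ys = {v \<in> V. x < v}"
    using assms by (simp_all add: xs_def ys_def)
  have sorted: "sorted_wrt (<) (xs @ x # ys)"
    using xs ys by (simp add: sorted_wrt_append) (meson order.strict_trans)
  then have sorted': "sorted_wrt (<) (xs @ ys)"
    by (simp add: sorted_wrt_append)
  have eq: "sorted_list_of_set (set l) = l" if "sorted_wrt (<) l" for l :: "'a list"
    using that by (simp add: sorted_list_of_set_sort_remdups strict_sorted_iff distinct_remdups_id
        sorted_sort_id)
  have "v < x \<or> x < v" if "v \<in> V" for v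
    using that assms(2) neq_iff by blast
  then have "set (xs @ ys) = V" "set (xs @ x # ys) = insert x V"
    using xs ys by auto
  with eq[OF sorted] eq[OF sorted'] show ?thesis
    by (metis that[OF sorted])
qed

lemma sum_subsets_card_Suc:
  fixes g :: "'b set \<Rightarrow> 'b \<Rightarrow> 'c :: comm_monoid_add"
  assumes S: "finite S"
  shows "(\<Sum>T | T \<subseteq> S \<and> card T = Suc k. \<Sum>x\<in>T. g T x)
           = (\<Sum>U | U \<subseteq> S \<and> card U = k. \<Sum>x\<in>S - U. g (insert x U) x)"
proof -
  have fin: "finite {T. T \<subseteq> S \<and> card T = j}" for j
    by (rule finite_subset[of _ "Pow S"]) (use S in auto)
  have finT: "T \<subseteq> S \<Longrightarrow> finite T" for T
    using S finite_subset by blast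
  have "(\<Sum>T | T \<subseteq> S \<and> card T = Suc k. \<Sum>x\<in>T. g T x)
          = (\<Sum>(T, x) \<in> Sigma {T. T \<subseteq> S \<and> card T = Suc k} (\<lambda>T. T). g T x)"
    by (rule sum.Sigma) (use fin finT in auto)
  also have "\<dots> = (\<Sum>(U, x) \<in> Sigma {U. U \<subseteq> S \<and> card U = k} (\<lambda>U. S - U). g (insert x U) x)"
    by (rule sum.reindex_bij_witness[of _ "\<lambda>(U, x). (insert x U, x)" "\<lambda>(T, x). (T - {x}, x)"])
      (auto simp: finT card_insert_if insert_absorb)
  also have "\<dots> = (\<Sum>U | U \<subseteq> S \<and> card U = k. \<Sum>x\<in>S - U. g (insert x U) x)"
    by (rule sum.Sigma[symmetric]) (use fin S in auto)
  finally show ?thesis .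
qed

lemma sum_card_subsets_le_Suc:
  fixes f :: "'b set \<Rightarrow> real"
  assumes U: "finite U"
    and step: "\<And>V x. V \<subseteq> U \<Longrightarrow> card V = m \<Longrightarrow> x \<in> U - V \<Longrightarrow> f V \<le> c * f (insert x V)"
  shows "real (card U - m) * (\<Sum>V | V \<subseteq> U \<and> card V = m. f V)
           \<le> c * (real (Suc m) * (\<Sum>T | T \<subseteq> U \<and> card T = Suc m. f T))"
proof -
  have "real (card U - m) * (\<Sum>V | V \<subseteq> U \<and> card V = m. f V)
      = (\<Sum>V | V \<subseteq> U \<and> card V = m. \<Sum>x\<in>U - V. f V)"
    unfolding sum_distrib_left
  proof (intro sum.cong refl)
    fix V assume "V \<in> {V. V \<subseteq> U \<and> card V = m}"
    then have "card (U - V) = card U - m"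
      using card_Diff_subset[of V U] finite_subset[OF _ U] by auto
    then show "real (card U - m) * f V = (\<Sum>x\<in>U - V. f V)"
      by simp
  qed
  also have "\<dots> \<le> (\<Sum>V | V \<subseteq> U \<and> card V = m. \<Sum>x\<in>U - V. c * f (insert x V))"
    using step by (intro sum_mono) auto
  also have "\<dots> = (\<Sum>T | T \<subseteq> U \<and> card T = Suc m. \<Sum>x\<in>T. c * f T)"
    by (rule sum_subsets_card_Suc[OF U, symmetric])
  also have "\<dots> = c * (real (Suc m) * (\<Sum>T | T \<subseteq> U \<and> card T = Suc m. f T))"
    by (simp add: sum_distrib_left mult.left_commute)
  finally show ?thesis .
qed

section \<open>Principal minors and the characteristic polynomial\<close>

lemma submatrix_principal:
  assumes "A \<in> carrier_mat n n" and "T \<subseteq> {0..<n}"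
  shows "submatrix A T T = mat (card T) (card T)
           (\<lambda>(i, j). A $$ (sorted_list_of_set T ! i, sorted_list_of_set T ! j))"
proof -
  have T: "{i. i < dim_row A \<and> i \<in> T} = T" "{j. j < dim_col A \<and> j \<in> T} = T"
    using assms by auto
  have "finite T"
    using assms(2) finite_subset by blast
  then show ?thesis
    unfolding submatrix_def T by (intro eq_matI) (auto simp: sorted_list_of_set_eq_map_pick)
qed

lemma submatrix_principal_carrier:
  assumes "A \<in> carrier_mat n n" and "T \<subseteq> {0..<n}"
  shows "submatrix A T T \<in> carrier_mat (card T) (card T)"
  by (simp add: submatrix_principal[OF assms])

lemma submatrix_full:
  assumes "A \<in> carrier_mat n n"
  shows "submatrix A {0..<n} {0..<n} = A"
  using assms by (intro eq_matI) (auto simp: submatrix_principal[OF assms])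

lemma mat_delete_submatrix_principal:
  assumes A: "A \<in> carrier_mat n n" and T: "T \<subseteq> {0..<n}" and i: "i < card T"
  shows "mat_delete (submatrix A T T) i i = submatrix A (T - {pick T i}) (T - {pick T i})"
proof -
  let ?L = "sorted_list_of_set T"
  have fin: "finite T"
    using T finite_subset by blast
  have pick: "pick T i = ?L ! i"
    using fin i by (simp add: sorted_list_of_set_eq_map_pick)
  have "pick T i \<in> T"
    using i by (rule pick_in_set[OF disjI1])
  then have card: "card (T - {pick T i}) = card T - 1"
    using fin by simp
  have "sorted_list_of_set (T - {pick T i}) = remove1 (?L ! i) ?L"
    using fin by (simp add: pick sorted_list_of_set_remove)
  also have "\<dots> = take i ?L @ drop (Suc i) ?L"
  proof -
    have "?L ! i \<notin> set (take i ?L)"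
      using i fin by (simp add: in_set_conv_nth nth_eq_iff_index_eq)
    then show ?thesis
      using i fin id_take_nth_drop[of i ?L] \<open>pick T i \<in> T\<close> pick by (subst remove1_split) auto
  qed
  finally have L': "sorted_list_of_set (T - {pick T i}) = take i ?L @ drop (Suc i) ?L" .
  have nth: "(take i ?L @ drop (Suc i) ?L) ! j = ?L ! (if j < i then j else Suc j)"
    if "j < card T - 1" for j
    using that i fin by (auto simp: nth_append min_def)
  have T': "T - {pick T i} \<subseteq> {0..<n}"
    using T by blast
  show ?thesis
    unfolding submatrix_principal[OF A T] submatrix_principal[OF A T'] mat_delete_def card L'
    by (intro eq_matI) (auto simp: nth)
qed

lemma pderiv_char_poly_submatrix:
  fixes A :: "'a :: idom mat"
  assumes A: "A \<in> carrier_mat n n" and T: "T \<subseteq> {0..<n}"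
  shows "pderiv (char_poly (submatrix A T T))
           = (\<Sum>x\<in>T. char_poly (submatrix A (T - {x}) (T - {x})))"
proof -
  have "pderiv (char_poly (submatrix A T T))
          = (\<Sum>i<card T. char_poly (mat_delete (submatrix A T T) i i))"
    by (rule pderiv_char_poly[OF submatrix_principal_carrier[OF A T]])
  also have "\<dots> = (\<Sum>i<card T. char_poly (submatrix A (T - {pick T i}) (T - {pick T i})))"
    by (simp add: mat_delete_submatrix_principal[OF A T])
  also have "\<dots> = (\<Sum>x\<in>T. char_poly (submatrix A (T - {x}) (T - {x})))"
    using T finite_subset by (intro sum.reindex_bij_betw bij_betw_pick) blast
  finally show ?thesis .
qed

lemma higher_pderiv_char_poly_submatrix:
  fixes A :: "'a :: idom mat"
  assumes A: "A \<in> carrier_mat n n" and S: "S \<subseteq> {0..<n}"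
  shows "m \<le> card S \<Longrightarrow> (pderiv ^^ m) (char_poly (submatrix A S S))
           = Polynomial.smult (of_nat (fact m))
               (\<Sum>T | T \<subseteq> S \<and> card T = card S - m. char_poly (submatrix A T T))"
proof (induction m)
  case 0
  have "finite S"
    using S finite_subset by blast
  then have "{T. T \<subseteq> S \<and> card T = card S} = {S}"
    by (auto dest: card_subset_eq)
  then show ?case by simp
next
  case (Suc m)
  define k where "k = card S - Suc m"
  have k: "card S - m = Suc k"
    using Suc.prems unfolding k_def by simp
  have finS: "finite S"
    using S finite_subset by blast
  have "(pderiv ^^ Suc m) (char_poly (submatrix A S S))
          = Polynomial.smult (of_nat (fact m))
              (\<Sum>T | T \<subseteq> S \<and> card T = Suc k. pderiv (char_poly (submatrix A T T)))"
    using Suc by (simp add: pderiv_smult pderiv_sum k)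
  also have "(\<Sum>T | T \<subseteq> S \<and> card T = Suc k. pderiv (char_poly (submatrix A T T)))
      = (\<Sum>T | T \<subseteq> S \<and> card T = Suc k. \<Sum>x\<in>T. char_poly (submatrix A (T - {x}) (T - {x})))"
    using S by (intro sum.cong refl pderiv_char_poly_submatrix[OF A]) auto
  also have "\<dots> = (\<Sum>U | U \<subseteq> S \<and> card U = k.
                    \<Sum>x\<in>S - U. char_poly (submatrix A (insert x U - {x}) (insert x U - {x})))"
    by (rule sum_subsets_card_Suc[OF finS])
  also have "\<dots> = (\<Sum>U | U \<subseteq> S \<and> card U = k. of_nat (Suc m) * char_poly (submatrix A U U))"
  proof (intro sum.cong refl)
    fix U assume U: "U \<in> {U. U \<subseteq> S \<and> card U = k}"
    then have "card (S - U) = Suc m"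
      using finS Suc.prems by (auto simp: k_def card_Diff_subset[OF finite_subset])
    moreover have "insert x U - {x} = U" if "x \<in> S - U" for x
      using that by auto
    ultimately show "(\<Sum>x\<in>S - U. char_poly (submatrix A (insert x U - {x}) (insert x U - {x})))
        = of_nat (Suc m) * char_poly (submatrix A U U)"
      by simp
  qed
  finally show ?case
    by (simp add: k_def sum_distrib_left of_nat_poly smult_sum2 smult_smult algebra_simps)
qed

lemma coeff_0_char_poly:
  fixes A :: "'a :: comm_ring_1 mat"
  assumes A: "A \<in> carrier_mat n n"
  shows "coeff (char_poly A) 0 = (-1) ^ n * det A"
proof -
  have "coeff (char_poly A) 0 = poly (det (char_poly_matrix A)) 0"
    by (simp add: char_poly_def poly_0_coeff_0)
  also have "\<dots> = det (map_mat (\<lambda>p. poly p 0) (char_poly_matrix A))"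
    by (rule comm_ring_hom.hom_det[OF poly_hom.comm_ring_hom_axioms, symmetric])
  also have "map_mat (\<lambda>p. poly p 0) (char_poly_matrix A) = (-1) \<cdot>\<^sub>m A"
    using A by (intro eq_matI) (auto simp: char_poly_matrix_def)
  finally show ?thesis
    using A by (simp add: det_smult)
qed

lemma coeff_char_poly_principal_minors:
  fixes A :: "'a :: {idom, ring_char_0} mat"
  assumes A: "A \<in> carrier_mat n n" and l: "l \<le> n"
  shows "coeff (char_poly A) l
           = (-1) ^ (n - l) * (\<Sum>T | T \<subseteq> {0..<n} \<and> card T = n - l. det (submatrix A T T))"
proof -
  have "of_nat (fact l) * coeff (char_poly A) l = coeff ((pderiv ^^ l) (char_poly A)) 0"
    by (simp add: coeff_higher_pderiv pochhammer_fact pochhammer_of_nat[symmetric])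
  also have "\<dots> = of_nat (fact l) *
      (\<Sum>T | T \<subseteq> {0..<n} \<and> card T = n - l. coeff (char_poly (submatrix A T T)) 0)"
    using l higher_pderiv_char_poly_submatrix[OF A, of "{0..<n}", unfolded submatrix_full[OF A]]
    by (simp add: coeff_sum)
  also have "(\<Sum>T | T \<subseteq> {0..<n} \<and> card T = n - l. coeff (char_poly (submatrix A T T)) 0)
      = (-1) ^ (n - l) * (\<Sum>T | T \<subseteq> {0..<n} \<and> card T = n - l. det (submatrix A T T))"
    by (simp add: coeff_0_char_poly[OF submatrix_principal_carrier[OF A]] sum_distrib_left)
  finally show ?thesis
    by simp
qed

section \<open>Max-min matrices\<close>

definition border_mat :: "'a mat \<Rightarrow> 'a \<Rightarrow> 'a \<Rightarrow> 'a mat" where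
  "border_mat M v d = mat (Suc (dim_row M)) (Suc (dim_row M))
     (\<lambda>(i, j). if i < dim_row M \<and> j < dim_row M then M $$ (i, j)
              else if i = dim_row M \<and> j = dim_row M then d else v)"

lemma dim_border_mat [simp]:
  "dim_row (border_mat M v d) = Suc (dim_row M)" "dim_col (border_mat M v d) = Suc (dim_row M)"
  unfolding border_mat_def by simp_all

lemma border_mat_carrier: "M \<in> carrier_mat n n \<Longrightarrow> border_mat M v d \<in> carrier_mat (Suc n) (Suc n)"
  unfolding border_mat_def by simp

lemma index_border_mat:
  assumes "M \<in> carrier_mat n n" "i < Suc n" "j < Suc n"
  shows "border_mat M v d $$ (i, j) =
    (if i < n \<and> j < n then M $$ (i, j) else if i = n \<and> j = n then d else v)"
  using assms unfolding border_mat_def by simp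

lemma det_add_multiples_of_last_row:
  fixes B :: "'a :: comm_ring_1 mat"
  assumes B: "B \<in> carrier_mat (Suc n) (Suc n)" and "c n = 0"
  shows "det (mat (Suc n) (Suc n) (\<lambda>(i, j). B $$ (i, j) + c i * B $$ (n, j))) = det B"
proof -
  define E :: "'a mat" where
    "E = mat (Suc n) (Suc n) (\<lambda>(i, j). if i = j then 1 else if j = n then c i else 0)"
  have E: "E \<in> carrier_mat (Suc n) (Suc n)"
    unfolding E_def by simp
  have "det E = prod_list (diag_mat E)"
    by (rule det_upper_triangular[OF _ E]) (auto simp: E_def)
  also have "\<dots> = 1"
    unfolding prod_list_diag_prod by (rule prod.neutral) (simp add: E_def)
  finally have "det E = 1" .
  have row_E: "row E i = unit_vec (Suc n) i + c i \<cdot>\<^sub>v unit_vec (Suc n) n" if "i < Suc n" for i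
  proof (rule eq_vecI)
    fix k assume "k < dim_vec (unit_vec (Suc n) i + c i \<cdot>\<^sub>v unit_vec (Suc n) n)"
    with that \<open>c n = 0\<close> show "row E i $ k = (unit_vec (Suc n) i + c i \<cdot>\<^sub>v unit_vec (Suc n) n) $ k"
      by (simp add: E_def)
  qed (simp add: E_def)
  let ?R = "mat (Suc n) (Suc n) (\<lambda>(i, j). B $$ (i, j) + c i * B $$ (n, j))"
  have "E * B = ?R"
  proof (rule eq_matI)
    fix i j assume ij: "i < dim_row ?R" "j < dim_col ?R"
    then have i: "i < Suc n" and col: "col B j \<in> carrier_vec (Suc n)"
      using B by simp_all
    have "(E * B) $$ (i, j) = unit_vec (Suc n) i \<bullet> col B j + (c i \<cdot>\<^sub>v unit_vec (Suc n) n) \<bullet> col B j"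
      using E B ij by (simp add: row_E add_scalar_prod_distrib[OF _ _ col])
    also have "\<dots> = col B j $ i + c i * col B j $ n"
      using i by (simp only: scalar_prod_left_unit[OF col] smult_scalar_prod_distrib[OF _ col]
          unit_vec_carrier)
    finally show "(E * B) $$ (i, j) = ?R $$ (i, j)"
      using B ij by simp
  qed (use E B in simp_all)
  then show ?thesis
    using det_mult[OF E B] \<open>det E = 1\<close> by simp
qed

lemma det_border_mat:
  fixes M :: "'a :: field mat"
  assumes M: "M \<in> carrier_mat n n" and d: "d \<noteq> 0"
  shows "det (border_mat M v d) = d * det (map_mat (\<lambda>x. x - v\<^sup>2 / d) M)"
proof -
  let ?B = "border_mat M v d"
  define R where "R = mat (Suc n) (Suc n)
    (\<lambda>(i, j). ?B $$ (i, j) + (if i < n then - v / d else 0) * ?B $$ (n, j))"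
  have R: "R \<in> carrier_mat (Suc n) (Suc n)"
    unfolding R_def by simp
  have R_entry: "R $$ (i, j) = (if i < n \<and> j < n then M $$ (i, j) - v\<^sup>2 / d
      else if i < n then 0 else if j < n then v else d)" if "i < Suc n" "j < Suc n" for i j
    using that d by (auto simp: R_def index_border_mat[OF M] power2_eq_square)
  have "det ?B = det R"
    unfolding R_def using M
    by (intro det_add_multiples_of_last_row[symmetric] border_mat_carrier) simp_all
  also have "\<dots> = (\<Sum>i<Suc n. R $$ (i, n) * cofactor R i n)"
    by (rule laplace_expansion_column[OF R]) simp
  also have "\<dots> = d * cofactor R n n"
    by (simp add: R_entry)
  also have "mat_delete R n n = map_mat (\<lambda>x. x - v\<^sup>2 / d) M"
    using M R by (intro eq_matI) (auto simp: mat_delete_def R_entry)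
  then have "cofactor R n n = det (map_mat (\<lambda>x. x - v\<^sup>2 / d) M)"
    by (simp add: cofactor_def)
  finally show ?thesis .
qed

definition maxmin_mat :: "('x \<Rightarrow> 'a :: minus) \<Rightarrow> ('x \<Rightarrow> 'a) \<Rightarrow> 'x list \<Rightarrow> 'a mat" where
  "maxmin_mat a b xs = mat (length xs) (length xs) (\<lambda>(i, j). b (xs ! max i j) - a (xs ! min i j))"

lemma dim_maxmin_mat [simp]:
  "dim_row (maxmin_mat a b xs) = length xs" "dim_col (maxmin_mat a b xs) = length xs"
  unfolding maxmin_mat_def by simp_all

lemma index_maxmin_mat [simp]:
  "i < length xs \<Longrightarrow> j < length xs \<Longrightarrow>
    maxmin_mat a b xs $$ (i, j) = b (xs ! max i j) - a (xs ! min i j)"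
  unfolding maxmin_mat_def by simp

lemma maxmin_mat_carrier: "maxmin_mat a b xs \<in> carrier_mat (length xs) (length xs)"
  unfolding maxmin_mat_def by simp

lemma det_maxmin_mat_snoc:
  fixes a b :: "'x \<Rightarrow> 'a :: comm_ring_1"
  assumes "xs \<noteq> []"
  shows "det (maxmin_mat a b (xs @ [t])) = det (border_mat (maxmin_mat a b xs)
           (b t - b (last xs)) (a (last xs) + b (last xs) - (a t + b t)))"
proof -
  define k where "k = length xs"
  obtain p where p: "k = Suc p"
    using assms unfolding k_def by (cases xs) auto
  have last: "xs ! p = last xs"
    using assms p by (simp add: k_def last_conv_nth)
  let ?A = "maxmin_mat a b (xs @ [t])"
  let ?B = "border_mat (maxmin_mat a b xs)
    (b t - b (last xs)) (a (last xs) + b (last xs) - (a t + b t))"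
  have A: "?A \<in> carrier_mat (Suc k) (Suc k)"
    using maxmin_mat_carrier[of a b "xs @ [t]"] by (simp add: k_def)
  have A_entry: "?A $$ (i, j) = b ((xs @ [t]) ! max i j) - a ((xs @ [t]) ! min i j)"
    if "i < Suc k" "j < Suc k" for i j
    using that unfolding k_def by simp
  have "det ?A = det (addrow (-1) k p ?A)"
    by (rule det_addrow[OF _ _ A, symmetric]) (use p in auto)
  also have "\<dots> = det (addcol (-1) k p (addrow (-1) k p ?A))"
    by (rule det_addcol[symmetric, of _ "Suc k"]) (use p A in auto)
  also have "addcol (-1) k p (addrow (-1) k p ?A) = ?B"
  proof (rule eq_matI)
    fix i j assume "i < dim_row ?B" and "j < dim_col ?B"
    then have ij: "i < Suc k" "j < Suc k"
      by (simp_all add: k_def)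
    show "addcol (-1) k p (addrow (-1) k p ?A) $$ (i, j) = ?B $$ (i, j)"
      using A ij p last
      by (cases "i < k"; cases "j < k")
        (auto simp: index_border_mat[OF maxmin_mat_carrier[of a b xs, folded k_def]] A_entry
          nth_append max_def min_def k_def le_less_Suc_eq)
  qed (use A in \<open>auto simp: k_def\<close>)
  finally show ?thesis .
qed

definition adjacent_pairs :: "'x list \<Rightarrow> ('x \<times> 'x) list" where
  "adjacent_pairs xs = zip xs (tl xs)"

lemma adjacent_pairs_simps [simp]:
  "adjacent_pairs [] = []"
  "adjacent_pairs [x] = []"
  "adjacent_pairs (x # y # ys) = (x, y) # adjacent_pairs (y # ys)"
  unfolding adjacent_pairs_def by simp_all

lemma adjacent_pairs_append_Cons:
  "xs \<noteq> [] \<Longrightarrow>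
    adjacent_pairs (xs @ y # ys) = adjacent_pairs xs @ (last xs, y) # adjacent_pairs (y # ys)"
proof (induction xs)
  case (Cons x xs)
  then show ?case by (cases xs) auto
qed simp

lemma adjacent_pairs_less:
  "sorted_wrt (<) xs \<Longrightarrow> (x, y) \<in> set (adjacent_pairs xs) \<Longrightarrow> x < y"
  by (auto simp: adjacent_pairs_def in_set_zip nth_tl sorted_wrt_iff_nth_less)

definition gap_prod :: "('x \<Rightarrow> 'a :: field) \<Rightarrow> ('x \<Rightarrow> 'a) \<Rightarrow> 'x list \<Rightarrow> 'a" where
  "gap_prod a b xs = (\<Prod>(x, y)\<leftarrow>adjacent_pairs xs. a y + b y - (a x + b x))"

definition gap_sum :: "('x \<Rightarrow> 'a :: field) \<Rightarrow> ('x \<Rightarrow> 'a) \<Rightarrow> 'x list \<Rightarrow> 'a" where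
  "gap_sum a b xs = (\<Sum>(x, y)\<leftarrow>adjacent_pairs xs. (b y - b x)\<^sup>2 / (a y + b y - (a x + b x)))"

definition maxmin_weight :: "('x \<Rightarrow> 'a :: field) \<Rightarrow> ('x \<Rightarrow> 'a) \<Rightarrow> 'x list \<Rightarrow> 'a" where
  "maxmin_weight a b xs = gap_prod a b xs * (b (hd xs) - a (hd xs) + gap_sum a b xs)"

lemma gap_prod_Cons_Cons:
  "gap_prod a b (x # y # ys) = (a y + b y - (a x + b x)) * gap_prod a b (y # ys)"
  unfolding gap_prod_def by simp

lemma gap_sum_Cons_Cons:
  "gap_sum a b (x # y # ys) = (b y - b x)\<^sup>2 / (a y + b y - (a x + b x)) + gap_sum a b (y # ys)"
  unfolding gap_sum_def by simp

lemma gap_prod_append_Cons: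
  "xs \<noteq> [] \<Longrightarrow> gap_prod a b (xs @ y # ys)
     = gap_prod a b xs * (a y + b y - (a (last xs) + b (last xs))) * gap_prod a b (y # ys)"
  unfolding gap_prod_def by (simp add: adjacent_pairs_append_Cons)

lemma gap_sum_append_Cons:
  "xs \<noteq> [] \<Longrightarrow> gap_sum a b (xs @ y # ys)
     = gap_sum a b xs + (b y - b (last xs))\<^sup>2 / (a y + b y - (a (last xs) + b (last xs)))
       + gap_sum a b (y # ys)"
  unfolding gap_sum_def by (simp add: adjacent_pairs_append_Cons)

lemma gap_prod_single [simp]: "gap_prod a b [x] = 1"
  unfolding gap_prod_def by simp

lemma gap_sum_single [simp]: "gap_sum a b [x] = 0"
  unfolding gap_sum_def by simp

lemma maxmin_weight_shift:
  "maxmin_weight a (\<lambda>x. b x + c) xs = maxmin_weight a b xs + c * gap_prod a b xs"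
  unfolding maxmin_weight_def gap_prod_def gap_sum_def by (simp add: algebra_simps)

lemma det_maxmin_mat:
  fixes a b :: "'x \<Rightarrow> 'a :: field"
  assumes "xs \<noteq> []" and "\<forall>(x, y) \<in> set (adjacent_pairs xs). a x + b x \<noteq> a y + b y"
  shows "det (maxmin_mat a b xs) = (-1) ^ (length xs - 1) * maxmin_weight a b xs"
  using assms
proof (induction xs arbitrary: b rule: rev_induct)
  case (snoc t xs)
  show ?case
  proof (cases "xs = []")
    case True
    then show ?thesis
      by (subst det_single) (auto simp: maxmin_weight_def maxmin_mat_carrier)
  next
    case False
    define \<sigma> where "\<sigma> = a t + b t - (a (last xs) + b (last xs))"
    define \<delta> where "\<delta> = b t - b (last xs)"
    define c where "c = \<delta>\<^sup>2 / \<sigma>"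
    let ?P = "gap_prod a b xs"
    have pairs: "adjacent_pairs (xs @ [t]) = adjacent_pairs xs @ [(last xs, t)]"
      using adjacent_pairs_append_Cons[OF False, of t "[]"] by simp
    have "\<sigma> \<noteq> 0"
      using snoc.prems(2) unfolding pairs \<sigma>_def by auto
    have IH: "det (maxmin_mat a (\<lambda>x. b x + c) xs)
        = (-1) ^ (length xs - 1) * maxmin_weight a (\<lambda>x. b x + c) xs"
      using snoc.prems(2) unfolding pairs by (intro snoc.IH[OF False]) (auto simp: algebra_simps)
    have "det (maxmin_mat a b (xs @ [t])) = det (border_mat (maxmin_mat a b xs) \<delta> (- \<sigma>))"
      unfolding det_maxmin_mat_snoc[OF False] \<sigma>_def \<delta>_def by simp
    txt \<open>The Schur complement of the corner entry is again a max-min matrix, with \<open>b\<close> shifted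
      by a constant; such a shift only adds a multiple of \<^const>\<open>gap_prod\<close> to the weight.\<close>
    also have "\<dots> = - \<sigma> * det (map_mat (\<lambda>z. z - \<delta>\<^sup>2 / - \<sigma>) (maxmin_mat a b xs))"
      using \<open>\<sigma> \<noteq> 0\<close> by (intro det_border_mat[OF maxmin_mat_carrier]) simp
    also have "map_mat (\<lambda>z. z - \<delta>\<^sup>2 / - \<sigma>) (maxmin_mat a b xs) = maxmin_mat a (\<lambda>x. b x + c) xs"
      unfolding c_def by (intro eq_matI) auto
    finally have "det (maxmin_mat a b (xs @ [t]))
        = - \<sigma> * ((-1) ^ (length xs - 1) * (maxmin_weight a b xs + c * ?P))"
      unfolding IH maxmin_weight_shift by simp
    moreover have "maxmin_weight a b (xs @ [t]) = \<sigma> * (maxmin_weight a b xs + c * ?P)"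
      using False \<open>\<sigma> \<noteq> 0\<close>
      unfolding maxmin_weight_def gap_prod_append_Cons[OF False, where y = t and ys = "[]"]
        gap_sum_append_Cons[OF False, where y = t and ys = "[]"]
      by (simp add: c_def \<sigma>_def \<delta>_def field_simps)
    moreover obtain p where "length xs = Suc p"
      using False by (cases xs) auto
    ultimately show ?thesis
      by simp
  qed
qed simp

section \<open>Weights of sorted index lists\<close>

text \<open>Inserting an index between two neighbours splits the gap \<open>p + q\<close> and the jump
  \<open>\<delta>\<^sub>1 + \<delta>\<^sub>2\<close> between them; this is where the factor 2 comes from.\<close>

lemma split_gap_inequality:
  fixes p q C \<delta>\<^sub>1 \<delta>\<^sub>2 :: real
  assumes "1 \<le> p" "1 \<le> q" "0 \<le> C"
  shows "(p + q) * C + (\<delta>\<^sub>1 + \<delta>\<^sub>2)\<^sup>2 \<le> 2 * (p * q * C + q * \<delta>\<^sub>1\<^sup>2 + p * \<delta>\<^sub>2\<^sup>2)"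
proof -
  have "p + q \<le> 2 * (p * q)"
    using mult_nonneg_nonneg[of "p - 1" "q - 1"] assms by (simp add: algebra_simps)
  then have "(p + q) * C \<le> 2 * (p * q * C)"
    using mult_right_mono[OF _ \<open>0 \<le> C\<close>] by fastforce
  moreover have "(\<delta>\<^sub>1 + \<delta>\<^sub>2)\<^sup>2 \<le> 2 * \<delta>\<^sub>1\<^sup>2 + 2 * \<delta>\<^sub>2\<^sup>2"
    using zero_le_power2[of "\<delta>\<^sub>1 - \<delta>\<^sub>2"] by (simp add: power2_eq_square algebra_simps)
  moreover have "\<delta>\<^sub>1\<^sup>2 \<le> q * \<delta>\<^sub>1\<^sup>2" "\<delta>\<^sub>2\<^sup>2 \<le> p * \<delta>\<^sub>2\<^sup>2"
    using mult_right_mono[OF \<open>1 \<le> q\<close>, of "\<delta>\<^sub>1\<^sup>2"]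
      mult_right_mono[OF \<open>1 \<le> p\<close>, of "\<delta>\<^sub>2\<^sup>2"] by simp_all
  ultimately show ?thesis
    by (smt (verit))
qed

context
  fixes a b :: "'x :: linorder \<Rightarrow> real"
  assumes gap: "\<And>x y. x < y \<Longrightarrow> a x + b x + 1 \<le> a y + b y"
    and width: "\<And>x. 1 \<le> b x - a x" "\<And>x. b x - a x \<le> 2"
begin

lemma gap_prod_ge_1: "sorted_wrt (<) xs \<Longrightarrow> 1 \<le> gap_prod a b xs"
  unfolding gap_prod_def
proof (induction xs rule: induct_list012)
  case (3 x y ys)
  then have "1 \<le> a y + b y - (a x + b x)"
    using gap[of x y] by simp
  moreover have "1 \<le> (\<Prod>(x, y)\<leftarrow>adjacent_pairs (y # ys). a y + b y - (a x + b x))"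
    using 3 by simp
  ultimately show ?case
    using mult_mono'[of 1 _ 1] by fastforce
qed simp_all

lemma gap_sum_nonneg: "sorted_wrt (<) xs \<Longrightarrow> 0 \<le> gap_sum a b xs"
  unfolding gap_sum_def
  by (intro sum_list_nonneg) (auto dest!: adjacent_pairs_less gap)

lemma maxmin_weight_pos: "sorted_wrt (<) xs \<Longrightarrow> 0 < maxmin_weight a b xs"
  unfolding maxmin_weight_def using gap_prod_ge_1 gap_sum_nonneg width(1)[of "hd xs"]
  by (smt (verit) mult_pos_pos)

lemma maxmin_weight_le_Cons:
  assumes "sorted_wrt (<) (t # y # ys)"
  shows "maxmin_weight a b (y # ys) \<le> 2 * maxmin_weight a b (t # y # ys)"
proof -
  define \<sigma> where "\<sigma> = a y + b y - (a t + b t)"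
  let ?P = "gap_prod a b (y # ys)" and ?S = "gap_sum a b (y # ys)"
  have "1 \<le> \<sigma>"
    using assms gap[of t y] by (simp add: \<sigma>_def)
  have "1 \<le> ?P" "0 \<le> ?S"
    using assms by (simp_all add: gap_prod_ge_1 gap_sum_nonneg)
  have "1 \<le> \<sigma> * (b t - a t)"
    using mult_mono'[of 1 \<sigma> 1 "b t - a t"] \<open>1 \<le> \<sigma>\<close> width(1)[of t] by simp
  moreover have "?S \<le> \<sigma> * ?S"
    using mult_right_mono[OF \<open>1 \<le> \<sigma>\<close> \<open>0 \<le> ?S\<close>] by simp
  ultimately have "b y - a y + ?S \<le> 2 * (\<sigma> * (b t - a t) + (b y - b t)\<^sup>2 + \<sigma> * ?S)"
    using width(2)[of y] zero_le_power2[of "b y - b t"] \<open>0 \<le> ?S\<close> by (smt (verit))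
  then have "maxmin_weight a b (y # ys) \<le> ?P * (2 * (\<sigma> * (b t - a t) + (b y - b t)\<^sup>2 + \<sigma> * ?S))"
    unfolding maxmin_weight_def using \<open>1 \<le> ?P\<close> by (intro mult_left_mono) simp_all
  also have "\<dots> = 2 * maxmin_weight a b (t # y # ys)"
    using \<open>1 \<le> \<sigma>\<close> unfolding maxmin_weight_def gap_prod_Cons_Cons gap_sum_Cons_Cons \<sigma>_def[symmetric]
    by (simp add: field_simps)
  finally show ?thesis .
qed

lemma maxmin_weight_le_snoc:
  assumes "sorted_wrt (<) (xs @ [t])" and "xs \<noteq> []"
  shows "maxmin_weight a b xs \<le> maxmin_weight a b (xs @ [t])"
proof -
  define \<sigma> where "\<sigma> = a t + b t - (a (last xs) + b (last xs))"
  let ?P = "gap_prod a b xs" and ?R = "b (hd xs) - a (hd xs) + gap_sum a b xs"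
  have "1 \<le> \<sigma>"
    using assms gap[of "last xs" t] by (simp add: \<sigma>_def sorted_wrt_append)
  have "sorted_wrt (<) xs"
    using assms by (simp add: sorted_wrt_append)
  then have "1 \<le> ?P" "1 \<le> ?R"
    using gap_prod_ge_1 gap_sum_nonneg[of xs] width(1)[of "hd xs"] by simp_all
  have "?R \<le> \<sigma> * ?R + (b t - b (last xs))\<^sup>2"
    using mult_right_mono[of 1 \<sigma> ?R] \<open>1 \<le> \<sigma>\<close> \<open>1 \<le> ?R\<close> zero_le_power2[of "b t - b (last xs)"]
    by (smt (verit))
  then have "maxmin_weight a b xs \<le> ?P * (\<sigma> * ?R + (b t - b (last xs))\<^sup>2)"
    unfolding maxmin_weight_def using \<open>1 \<le> ?P\<close> by (intro mult_left_mono) simp_all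
  also have "\<dots> = maxmin_weight a b (xs @ [t])"
    using \<open>1 \<le> \<sigma>\<close> assms(2)
    unfolding maxmin_weight_def gap_prod_append_Cons[OF assms(2)] gap_sum_append_Cons[OF assms(2)]
      \<sigma>_def[symmetric]
    by (simp add: field_simps)
  finally show ?thesis .
qed

lemma maxmin_weight_le_insert_between:
  assumes sorted: "sorted_wrt (<) (xs @ t # y # ys)" and "xs \<noteq> []"
  shows "maxmin_weight a b (xs @ y # ys) \<le> 2 * maxmin_weight a b (xs @ t # y # ys)"
proof -
  let ?x = "last xs"
  define p where "p = a t + b t - (a ?x + b ?x)"
  define q where "q = a y + b y - (a t + b t)"
  define \<delta>\<^sub>1 where "\<delta>\<^sub>1 = b t - b ?x"
  define \<delta>\<^sub>2 where "\<delta>\<^sub>2 = b y - b t"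
  let ?P = "gap_prod a b xs * gap_prod a b (y # ys)"
  define C where "C = b (hd xs) - a (hd xs) + gap_sum a b xs + gap_sum a b (y # ys)"
  have "sorted_wrt (<) xs" "sorted_wrt (<) (y # ys)" "?x < t" "t < y"
    using sorted \<open>xs \<noteq> []\<close> by (simp_all add: sorted_wrt_append)
  then have "1 \<le> p" "1 \<le> q" "1 \<le> ?P" "0 \<le> C"
    using gap[of ?x t] gap[of t y] gap_prod_ge_1 gap_sum_nonneg width(1)[of "hd xs"]
      mult_mono'[of 1 "gap_prod a b xs" 1 "gap_prod a b (y # ys)"]
    by (simp_all add: p_def q_def C_def)
  have key: "(p + q) * C + (\<delta>\<^sub>1 + \<delta>\<^sub>2)\<^sup>2 \<le> 2 * (p * q * C + q * \<delta>\<^sub>1\<^sup>2 + p * \<delta>\<^sub>2\<^sup>2)"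
    using \<open>1 \<le> p\<close> \<open>1 \<le> q\<close> \<open>0 \<le> C\<close> by (rule split_gap_inequality)
  have "maxmin_weight a b (xs @ y # ys)
      = ?P * (p + q) * (C + (\<delta>\<^sub>1 + \<delta>\<^sub>2)\<^sup>2 / (p + q))"
    using \<open>xs \<noteq> []\<close>
    unfolding maxmin_weight_def gap_prod_append_Cons[OF \<open>xs \<noteq> []\<close>]
      gap_sum_append_Cons[OF \<open>xs \<noteq> []\<close>]
    by (simp add: p_def q_def \<delta>\<^sub>1_def \<delta>\<^sub>2_def C_def algebra_simps)
  also have "\<dots> = ?P * ((p + q) * C + (\<delta>\<^sub>1 + \<delta>\<^sub>2)\<^sup>2)"
    using \<open>1 \<le> p\<close> \<open>1 \<le> q\<close> by (simp add: field_simps)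
  also have "\<dots> \<le> ?P * (2 * (p * q * C + q * \<delta>\<^sub>1\<^sup>2 + p * \<delta>\<^sub>2\<^sup>2))"
    using \<open>1 \<le> ?P\<close> key by (intro mult_left_mono) simp_all
  also have "\<dots> = 2 * (?P * (p * q) * (C + \<delta>\<^sub>1\<^sup>2 / p + \<delta>\<^sub>2\<^sup>2 / q))"
    using \<open>1 \<le> p\<close> \<open>1 \<le> q\<close> by (simp add: field_simps)
  also have "\<dots> = 2 * maxmin_weight a b (xs @ t # y # ys)"
    using \<open>xs \<noteq> []\<close>
    unfolding maxmin_weight_def gap_prod_append_Cons[OF \<open>xs \<noteq> []\<close>]
      gap_sum_append_Cons[OF \<open>xs \<noteq> []\<close>] gap_prod_Cons_Cons gap_sum_Cons_Cons
    by (simp add: p_def q_def \<delta>\<^sub>1_def \<delta>\<^sub>2_def C_def algebra_simps)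
  finally show ?thesis .
qed

lemma maxmin_weight_le_insert:
  assumes "sorted_wrt (<) (xs @ t # ys)" and "xs @ ys \<noteq> []"
  shows "maxmin_weight a b (xs @ ys) \<le> 2 * maxmin_weight a b (xs @ t # ys)"
proof (cases ys)
  case Nil
  then have "maxmin_weight a b xs \<le> maxmin_weight a b (xs @ [t])"
    using assms by (intro maxmin_weight_le_snoc) auto
  moreover have "0 < maxmin_weight a b (xs @ [t])"
    using assms Nil by (intro maxmin_weight_pos) simp
  ultimately show ?thesis
    using Nil by simp
next
  case (Cons y ys')
  then show ?thesis
    using assms maxmin_weight_le_Cons[of t y ys'] maxmin_weight_le_insert_between[of xs t y ys']
    by (cases "xs = []") simp_all
qed

end

section \<open>Steiner distances on the path\<close>

lemma path_E_edge: "{u, w} \<in> path_E n \<Longrightarrow> w = Suc u \<or> u = Suc w"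
  unfolding path_E_def by (auto simp: doubleton_eq_iff)

lemma inj_on_path_edge: "inj_on (\<lambda>i. {i, Suc i}) A"
  by (rule inj_onI) (simp add: doubleton_eq_iff, linarith)

lemma connected_subgraph_path_has_edge:
  assumes G: "connected_subgraph (path_V n) (path_E n) W F"
    and "u \<in> W" "w \<in> W" "u \<le> i" "i < w"
  shows "{i, Suc i} \<in> F"
proof (rule ccontr)
  assume missing: "{i, Suc i} \<notin> F"
  let ?r = "{(x, y). {x, y} \<in> F}"
  have "y \<le> i" if "(u, y) \<in> ?r\<^sup>*" for y
    using that
  proof (induction rule: rtrancl_induct)
    case base
    then show ?case using \<open>u \<le> i\<close> by simp
  next
    case (step y z)
    then have "{y, z} \<in> path_E n"
      using G unfolding connected_subgraph_def by auto
    then have "z = Suc y \<or> y = Suc z"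
      by (rule path_E_edge)
    then show ?case
      using step missing by (cases "y = i") auto
  qed
  moreover have "(u, w) \<in> ?r\<^sup>*"
    using G \<open>u \<in> W\<close> \<open>w \<in> W\<close> unfolding connected_subgraph_def by blast
  ultimately show False
    using \<open>i < w\<close> by fastforce
qed

lemma card_connected_subgraph_path:
  assumes G: "connected_subgraph (path_V n) (path_E n) W F" and "finite F"
    and "u \<in> W" "w \<in> W"
  shows "w - u \<le> card F"
proof -
  have "(\<lambda>i. {i, Suc i}) ` {u..<w} \<subseteq> F"
    using connected_subgraph_path_has_edge[OF G \<open>u \<in> W\<close> \<open>w \<in> W\<close>] by auto
  then have "card ((\<lambda>i. {i, Suc i}) ` {u..<w}) \<le> card F"
    using \<open>finite F\<close> by (simp add: card_mono)
  moreover have "inj_on (\<lambda>i. {i, Suc i}) {u..<w}"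
    by (rule inj_on_path_edge)
  ultimately show ?thesis
    by (simp add: card_image)
qed

lemma connected_subgraph_path_interval:
  assumes "1 \<le> u" "u \<le> w" "w \<le> n"
  shows "connected_subgraph (path_V n) (path_E n) {u..w} ((\<lambda>i. {i, Suc i}) ` {u..<w})"
proof -
  let ?F = "(\<lambda>i. {i, Suc i}) ` {u..<w}"
  let ?r = "{(x, y). {x, y} \<in> ?F}"
  have "sym ?r"
    by (auto intro!: symI simp: insert_commute)
  then have sym: "sym (?r\<^sup>*)"
    by (rule sym_rtrancl)
  have up: "(x, y) \<in> ?r\<^sup>*" if "u \<le> x" "x \<le> y" "y \<le> w" for x y
    using that(2,3)
  proof (induction y rule: dec_induct)
    case (step y)
    then have "(y, Suc y) \<in> ?r"
      using \<open>u \<le> x\<close> by auto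
    with step show ?case
      by (meson Suc_leD rtrancl.rtrancl_into_rtrancl)
  qed simp
  have "(x, y) \<in> ?r\<^sup>*" if "x \<in> {u..w}" "y \<in> {u..w}" for x y
    using up[of x y] up[of y x] sym that by (cases "x \<le> y") (auto dest: symD)
  moreover have "?F \<subseteq> path_E n"
    using assms unfolding path_E_def by force
  ultimately show ?thesis
    using assms unfolding connected_subgraph_def path_V_def by auto
qed

lemma steiner_dist_path:
  assumes "finite S" "S \<noteq> {}" "S \<subseteq> {1..n}"
  shows "steiner_dist (path_V n) (path_E n) S = Max S - Min S"
  unfolding steiner_dist_def
proof (rule Least_equality)
  have "1 \<le> Min S" "Min S \<le> Max S" "Max S \<le> n"
    using assms by auto
  then show "\<exists>W F. connected_subgraph (path_V n) (path_E n) W F \<and> S \<subseteq> W \<and> finite F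
                  \<and> card F = Max S - Min S"
    using assms(1)
    by (intro exI[of _ "{Min S..Max S}"] exI[of _ "(\<lambda>i. {i, Suc i}) ` {Min S..<Max S}"]
        conjI connected_subgraph_path_interval)
      (auto simp: card_image inj_on_path_edge)
next
  fix k
  assume "\<exists>W F. connected_subgraph (path_V n) (path_E n) W F \<and> S \<subseteq> W \<and> finite F \<and> card F = k"
  then obtain W F where "connected_subgraph (path_V n) (path_E n) W F" "S \<subseteq> W" "finite F"
    "card F = k"
    by blast
  moreover have "Min S \<in> W" "Max S \<in> W"
    using assms Min_in Max_in \<open>S \<subseteq> W\<close> by blast+
  ultimately show "Max S - Min S \<le> k"
    using card_connected_subgraph_path by blast
qed

section \<open>The entries of \<open>D_path\<close>\<close>

definition B_lo :: "nat \<Rightarrow> nat" where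
  "B_lo k = k div 2 + 1"

definition B_hi :: "nat \<Rightarrow> nat" where
  "B_hi k = (k + 1) div 2 + 2"

lemma B_elem_eq: "B_elem k = {B_lo k, B_hi k}"
  unfolding B_elem_def B_lo_def B_hi_def by (cases "even k") (auto elim!: evenE oddE)

lemma B_lo_plus_B_hi: "B_lo k + B_hi k = k + 3"
  unfolding B_lo_def B_hi_def by presburger

lemma B_lo_less_B_hi: "B_lo k < B_hi k"
  unfolding B_lo_def B_hi_def by linarith

lemma B_hi_le_B_lo_plus_2: "B_hi k \<le> B_lo k + 2"
  unfolding B_lo_def B_hi_def by linarith

lemma mono_B_lo: "mono B_lo"
  unfolding B_lo_def by (intro monoI) (simp add: div_le_mono)

lemma mono_B_hi: "mono B_hi"
  unfolding B_hi_def by (intro monoI) (simp add: div_le_mono)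

lemma D_path_carrier: "D_path n \<in> carrier_mat (2 * n - 3) (2 * n - 3)"
  unfolding D_path_def by simp

lemma D_path_entry:
  assumes "r < 2 * n - 3" "c < 2 * n - 3"
  shows "D_path n $$ (r, c) = int (B_hi (max r c)) - int (B_lo (min r c))"
proof -
  let ?S = "B_elem r \<union> B_elem c"
  have S: "?S = {B_lo r, B_hi r, B_lo c, B_hi c}"
    by (auto simp: B_elem_eq)
  have "B_hi r \<le> n" "B_hi c \<le> n"
    using assms unfolding B_hi_def by linarith+
  then have S_range: "?S \<subseteq> {1..n}"
    using B_lo_less_B_hi[of r] B_lo_less_B_hi[of c] unfolding S by (auto simp: B_lo_def)
  have Max: "Max ?S = B_hi (max r c)"
    using B_lo_less_B_hi[of r] B_lo_less_B_hi[of c]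
      monoD[OF mono_B_hi, of r c] monoD[OF mono_B_hi, of c r]
    unfolding S by (cases "r \<le> c") (auto simp: max_def)
  have Min: "Min ?S = B_lo (min r c)"
    using B_lo_less_B_hi[of r] B_lo_less_B_hi[of c]
      monoD[OF mono_B_lo, of r c] monoD[OF mono_B_lo, of c r]
    unfolding S by (cases "r \<le> c") (auto simp: min_def)
  have "B_lo (min r c) \<le> B_hi (max r c)"
    using B_lo_less_B_hi[of "min r c"] monoD[OF mono_B_hi, of "min r c" "max r c"] by linarith
  moreover have "D_path n $$ (r, c) = int (steiner_dist (path_V n) (path_E n) ?S)"
    using assms unfolding D_path_def steiner2_entry_def by simp
  moreover have "steiner_dist (path_V n) (path_E n) ?S = B_hi (max r c) - B_lo (min r c)"
    unfolding Max[symmetric] Min[symmetric] using S_range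
    by (intro steiner_dist_path) (auto simp: S)
  ultimately show ?thesis
    by simp
qed

section \<open>The principal minors of \<open>D_path\<close>\<close>

definition path_minor_weight :: "nat set \<Rightarrow> real" where
  "path_minor_weight T =
     maxmin_weight (\<lambda>k. real (B_lo k)) (\<lambda>k. real (B_hi k)) (sorted_list_of_set T)"

lemma B_lo_plus_B_hi_gap:
  "x < y \<Longrightarrow> real (B_lo x) + real (B_hi x) + 1 \<le> real (B_lo y) + real (B_hi y)"
  using B_lo_plus_B_hi[of x] B_lo_plus_B_hi[of y] by (simp flip: of_nat_add)

lemma B_hi_minus_B_lo_bounds:
  "1 \<le> real (B_hi k) - real (B_lo k)" "real (B_hi k) - real (B_lo k) \<le> 2"
  using B_lo_less_B_hi[of k] B_hi_le_B_lo_plus_2[of k] by linarith+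

text \<open>This holds for every \<open>T\<close>: for \<open>T = {}\<close> the weight is \<open>B_hi k - B_lo k\<close> at the
  unspecified index \<open>k = hd []\<close>.\<close>

lemma path_minor_weight_pos: "0 < path_minor_weight T"
  unfolding path_minor_weight_def
  by (rule maxmin_weight_pos[OF B_lo_plus_B_hi_gap B_hi_minus_B_lo_bounds]) simp_all

lemma path_minor_weight_insert:
  assumes "finite V" "V \<noteq> {}" "x \<notin> V"
  shows "path_minor_weight V \<le> 2 * path_minor_weight (insert x V)"
proof -
  obtain xs ys where "sorted_wrt (<) (xs @ x # ys)"
    and "sorted_list_of_set V = xs @ ys" "sorted_list_of_set (insert x V) = xs @ x # ys"
    using sorted_list_of_set_insert_split[OF assms(1,3)] .
  moreover have "xs @ ys \<noteq> []"
    using assms \<open>sorted_list_of_set V = xs @ ys\<close> by (metis sorted_list_of_set_eq_Nil_iff)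
  ultimately show ?thesis
    unfolding path_minor_weight_def
    by (simp add: maxmin_weight_le_insert[OF B_lo_plus_B_hi_gap B_hi_minus_B_lo_bounds])
qed

lemma submatrix_D_path:
  assumes T: "T \<subseteq> {0..<2 * n - 3}"
  shows "submatrix (D_path n) T T
           = maxmin_mat (\<lambda>k. int (B_lo k)) (\<lambda>k. int (B_hi k)) (sorted_list_of_set T)"
proof -
  let ?L = "sorted_list_of_set T"
  have fin: "finite T"
    using T finite_subset by blast
  have L: "?L ! i < 2 * n - 3" if "i < card T" for i
    using T fin that by (metis atLeastLessThan_iff length_sorted_list_of_set nth_mem
        set_sorted_list_of_set subsetD)
  have mono: "?L ! i \<le> ?L ! j" if "i \<le> j" "j < card T" for i j
    using that by (simp add: sorted_nth_mono)
  have "max (?L ! i) (?L ! j) = ?L ! max i j" "min (?L ! i) (?L ! j) = ?L ! min i j"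
    if "i < card T" "j < card T" for i j
    using mono[of i j] mono[of j i] that by (auto simp: max_def min_def)
  then show ?thesis
    unfolding submatrix_principal[OF D_path_carrier T]
    by (intro eq_matI) (auto simp: D_path_entry L)
qed

lemma det_submatrix_D_path:
  assumes T: "T \<subseteq> {0..<2 * n - 3}" and "T \<noteq> {}"
  shows "real_of_int (det (submatrix (D_path n) T T)) = (-1) ^ (card T - 1) * path_minor_weight T"
proof -
  let ?L = "sorted_list_of_set T"
  have fin: "finite T"
    using T finite_subset by blast
  have map: "map_mat real_of_int (maxmin_mat (\<lambda>k. int (B_lo k)) (\<lambda>k. int (B_hi k)) ?L)
      = maxmin_mat (\<lambda>k. real (B_lo k)) (\<lambda>k. real (B_hi k)) ?L"
    by (intro eq_matI) simp_all
  have gaps: "\<forall>(x, y) \<in> set (adjacent_pairs ?L).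
      real (B_lo x) + real (B_hi x) \<noteq> real (B_lo y) + real (B_hi y)"
  proof clarify
    fix x y assume "(x, y) \<in> set (adjacent_pairs ?L)"
    then have "x < y"
      by (rule adjacent_pairs_less[rotated]) simp
    then show "real (B_lo x) + real (B_hi x) = real (B_lo y) + real (B_hi y) \<Longrightarrow> False"
      using B_lo_plus_B_hi_gap[of x y] by linarith
  qed
  have "real_of_int (det (submatrix (D_path n) T T))
      = det (map_mat real_of_int (maxmin_mat (\<lambda>k. int (B_lo k)) (\<lambda>k. int (B_hi k)) ?L))"
    unfolding submatrix_D_path[OF T] by (rule of_int_hom.hom_det[symmetric])
  also have "\<dots> = (-1) ^ (length ?L - 1) * path_minor_weight T"
    unfolding map path_minor_weight_def using fin \<open>T \<noteq> {}\<close> gaps by (intro det_maxmin_mat) simp_all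
  finally show ?thesis
    using fin by simp
qed

lemma coeff_char_poly_D_path:
  assumes "l < 2 * n - 3"
  shows "real_of_int (coeff (char_poly (D_path n)) l)
           = - (\<Sum>T | T \<subseteq> {0..<2 * n - 3} \<and> card T = 2 * n - 3 - l. path_minor_weight T)"
proof -
  obtain k where k: "2 * n - 3 - l = Suc k"
    using assms by (cases "2 * n - 3 - l") auto
  have "coeff (char_poly (D_path n)) l
      = (-1) ^ Suc k * (\<Sum>T | T \<subseteq> {0..<2 * n - 3} \<and> card T = Suc k. det (submatrix (D_path n) T T))"
    using coeff_char_poly_principal_minors[OF D_path_carrier[of n], of l] assms unfolding k by simp
  then have "real_of_int (coeff (char_poly (D_path n)) l)
      = (-1) ^ Suc k * (\<Sum>T | T \<subseteq> {0..<2 * n - 3} \<and> card T = Suc k.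
                          real_of_int (det (submatrix (D_path n) T T)))"
    by simp
  also have "\<dots> = (-1) ^ Suc k * (\<Sum>T | T \<subseteq> {0..<2 * n - 3} \<and> card T = Suc k.
                          (-1) ^ k * path_minor_weight T)"
  proof (intro arg_cong2[where f = "(*)"] sum.cong refl)
    fix T assume "T \<in> {T. T \<subseteq> {0..<2 * n - 3} \<and> card T = Suc k}"
    then show "real_of_int (det (submatrix (D_path n) T T)) = (-1) ^ k * path_minor_weight T"
      using det_submatrix_D_path[of T n] by fastforce
  qed
  also have "\<dots> = - (\<Sum>T | T \<subseteq> {0..<2 * n - 3} \<and> card T = Suc k. path_minor_weight T)"
    by (simp add: sum_distrib_left sum_negf flip: power_add mult_2)
  finally show ?thesis
    by (simp only: k)
qed

lemma sum_path_minor_weight_less_Suc: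
  assumes "1 \<le> m" and "2 * Suc m < N - m"
  shows "(\<Sum>T | T \<subseteq> {0..<N} \<and> card T = m. path_minor_weight T)
           < (\<Sum>T | T \<subseteq> {0..<N} \<and> card T = Suc m. path_minor_weight T)"
    (is "?W m < ?W (Suc m)")
proof -
  have "0 < ?W m"
  proof (rule sum_pos2)
    show "finite {T. T \<subseteq> {0..<N} \<and> card T = m}"
      by (rule finite_subset[of _ "Pow {0..<N}"]) auto
    show "{0..<m} \<in> {T. T \<subseteq> {0..<N} \<and> card T = m}"
      using assms(2) by auto
  qed (simp_all add: path_minor_weight_pos less_imp_le)
  have "real (card {0..<N} - m) * ?W m \<le> 2 * (real (Suc m) * ?W (Suc m))"
  proof (rule sum_card_subsets_le_Suc)
    fix V x assume "V \<subseteq> {0..<N}" "card V = m" "x \<in> {0..<N} - V"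
    then show "path_minor_weight V \<le> 2 * path_minor_weight (insert x V)"
      using \<open>1 \<le> m\<close> finite_subset[OF \<open>V \<subseteq> {0..<N}\<close>]
      by (intro path_minor_weight_insert) auto
  qed simp
  then have "real (N - m) * ?W m \<le> 2 * (real (Suc m) * ?W (Suc m))"
    by simp
  moreover have "2 * (real (Suc m) * ?W m) < real (N - m) * ?W m"
    using \<open>0 < ?W m\<close> assms(2) of_nat_less_iff[of "2 * Suc m" "N - m", where 'a = real]
    by (subst mult.assoc[symmetric], intro mult_strict_right_mono) simp_all
  ultimately have "real (Suc m) * ?W m < real (Suc m) * ?W (Suc m)"
    by linarith
  then show ?thesis
    by simp
qed

lemma abs_coeff_char_poly_D_path_less:
  assumes "l < 2 * n - 3" and "2 * (2 * n - 2 - l) < l"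
  shows "\<bar>coeff (char_poly (D_path n)) l\<bar> < \<bar>coeff (char_poly (D_path n)) (l - 1)\<bar>"
proof -
  let ?N = "2 * n - 3"
  let ?c = "\<lambda>i. real_of_int (coeff (char_poly (D_path n)) i)"
  define m where "m = ?N - l"
  define W where "W k = (\<Sum>T | T \<subseteq> {0..<?N} \<and> card T = k. path_minor_weight T)" for k
  have m: "1 \<le> m" "2 * Suc m < ?N - m" and Suc_m: "Suc m = ?N - (l - 1)"
    using assms unfolding m_def by arith+
  have "W m < W (Suc m)"
    using m unfolding W_def by (rule sum_path_minor_weight_less_Suc)
  moreover have "0 \<le> W m"
    unfolding W_def by (simp add: sum_nonneg less_imp_le path_minor_weight_pos)
  moreover have "?c l = - W m"
    unfolding W_def m_def by (rule coeff_char_poly_D_path[OF assms(1)])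
  moreover have "?c (l - 1) = - W (Suc m)"
    unfolding W_def Suc_m by (rule coeff_char_poly_D_path) (use assms(1) in simp)
  ultimately have "\<bar>?c l\<bar> < \<bar>?c (l - 1)\<bar>"
    by simp
  then show ?thesis
    by (simp only: of_int_abs[symmetric] of_int_less_iff)
qed

theorem theorem5p14:
  fixes n l :: nat
  assumes "n > 2"
    and "l \<le> 2 * n - 4"
    and "\<bar>coeff (char_poly (D_path n)) l\<bar> =
           Max {\<bar>coeff (char_poly (D_path n)) i\<bar> | i. i \<le> 2 * n - 4}"
  shows "l \<le> (7 * n) div 5"
proof (rule ccontr)
  assume "\<not> l \<le> (7 * n) div 5"
  then have "2 * (2 * n - 2 - l) < l"
    by linarith
  then have "\<bar>coeff (char_poly (D_path n)) l\<bar> < \<bar>coeff (char_poly (D_path n)) (l - 1)\<bar>"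
    using assms(1,2) by (intro abs_coeff_char_poly_D_path_less) auto
  moreover have "\<bar>coeff (char_poly (D_path n)) (l - 1)\<bar> \<le> \<bar>coeff (char_poly (D_path n)) l\<bar>"
    unfolding assms(3) using assms(2) by (intro Max_ge) auto
  ultimately show False
    by simp
qed

end
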